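(* For every $l\in\mathbb N$, the intersection of the real curve $\Gamma_l(\mathbb R)=\{(\lambda,\mu)\in\mathbb R^2: P_l(\lambda,\mu^2)=0\}$ with the open half-plane $\{\mu>0\}$ consists of $l$ pairwise non-intersecting smooth curves, none of which has a horizontal tangent line $\{\mu=\mathrm{const}\}$.
   Context: For $l\in\mathbb N$ and $\mu\in\mathbb C$, $H_l$ is the tridiagonal $l\times l$ matrix with entries $H_{l;jj}=(1-j)(l-j+1)$, $H_{l;j,j+1}=\mu j$, $H_{l;j,j-1}=\mu(l-j+1)$, and $H_{l;ij}=0$ if $|i-j|\geq 2$. It is known that $\det(H_l+\lambda\,\mathrm{Id})$ is a polynomial of degree $l$ in $(\lambda,\mu^2)$, written $P_l(\lambda,\mu^2)$. *)

theory Defs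
  imports "HOL-Analysis.Analysis" "Jordan_Normal_Form.Determinant"
begin

text \<open>The tridiagonal l x l matrix H_l(mu), with 0-based indices i, j
  (paper index = our index + 1):
  diagonal  (1-(i+1))(l-(i+1)+1) = -i (l-i),
  superdiagonal (i,i+1): mu (i+1),
  subdiagonal (i,i-1): mu (l-(i+1)+1) = mu (l-i).\<close>
definition H :: "nat \<Rightarrow> 'a::comm_ring_1 \<Rightarrow> 'a mat" where
  "H l \<mu> = mat l l (\<lambda>(i,j).
      if j = i then - (of_nat i) * (of_nat l - of_nat i)
      else if j = i + 1 then \<mu> * of_nat (i + 1)
      else if i = j + 1 then \<mu> * (of_nat l - of_nat i)
      else 0)"

text \<open>P_l(lambda, mu^2) = det(H_l(mu) + lambda Id).\<close>
definition P_det :: "nat \<Rightarrow> 'a::comm_ring_1 \<Rightarrow> 'a \<Rightarrow> 'a" where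
  "P_det l x \<mu> = det (H l \<mu> + x \<cdot>\<^sub>m 1\<^sub>m l)"

definition smooth_on :: "(real \<Rightarrow> real) \<Rightarrow> real set \<Rightarrow> bool" where
  "smooth_on f S \<longleftrightarrow> (\<forall>n. \<forall>x\<in>S. ((deriv ^^ n) f) differentiable (at x))"

end

theory Submission
  imports Defs
begin

(* For mu > 0 the matrix H_l + lambda Id is tridiagonal and the products of its opposite
   off-diagonal entries are positive.  Its leading principal minors therefore satisfy a
   three-term recurrence, and the classical interlacing argument shows that P_l(., mu^2) has
   l simple real roots rho_0(mu) < ... < rho_(l-1)(mu).  A sign change of P around a simple
   root persists under perturbation of mu, so each rho_j is continuous, and then the implicit
   function theorem gives rho_j' = - P_mu / P_lambda.  With c = 1 / P_lambda(rho_j, mu), the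
   pair (rho_j, c) solves a polynomial system of ODEs, so every derivative of rho_j is a
   polynomial in rho_j, mu and c; hence rho_j is smooth.  Such polynomials are represented
   syntactically by pexpr, whose variables x, t, c stand for rho_j, mu and c. *)

datatype pexpr = Const real | Vx | Vt | Vc | Add pexpr pexpr | Mul pexpr pexpr

fun peval :: "pexpr \<Rightarrow> real \<Rightarrow> real \<Rightarrow> real \<Rightarrow> real" where
  "peval (Const a) x t c = a"
| "peval Vx x t c = x"
| "peval Vt x t c = t"
| "peval Vc x t c = c"
| "peval (Add e1 e2) x t c = peval e1 x t c + peval e2 x t c"
| "peval (Mul e1 e2) x t c = peval e1 x t c * peval e2 x t c"

fun pexpr_deriv :: "pexpr \<Rightarrow> pexpr \<Rightarrow> pexpr \<Rightarrow> pexpr \<Rightarrow> pexpr" where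
  "pexpr_deriv dx dt dc (Const a) = Const 0"
| "pexpr_deriv dx dt dc Vx = dx"
| "pexpr_deriv dx dt dc Vt = dt"
| "pexpr_deriv dx dt dc Vc = dc"
| "pexpr_deriv dx dt dc (Add e1 e2) = Add (pexpr_deriv dx dt dc e1) (pexpr_deriv dx dt dc e2)"
| "pexpr_deriv dx dt dc (Mul e1 e2) =
     Add (Mul (pexpr_deriv dx dt dc e1) e2) (Mul e1 (pexpr_deriv dx dt dc e2))"

abbreviation pdx :: "pexpr \<Rightarrow> pexpr" where "pdx \<equiv> pexpr_deriv (Const 1) (Const 0) (Const 0)"
abbreviation pdt :: "pexpr \<Rightarrow> pexpr" where "pdt \<equiv> pexpr_deriv (Const 0) (Const 1) (Const 0)"
abbreviation pdc :: "pexpr \<Rightarrow> pexpr" where "pdc \<equiv> pexpr_deriv (Const 0) (Const 0) (Const 1)"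

fun c_free :: "pexpr \<Rightarrow> bool" where
  "c_free Vc = False"
| "c_free (Add e1 e2) = (c_free e1 \<and> c_free e2)"
| "c_free (Mul e1 e2) = (c_free e1 \<and> c_free e2)"
| "c_free _ = True"

lemma peval_pexpr_deriv:
  "peval (pexpr_deriv dx dt dc e) x t c =
     peval dx x t c * peval (pdx e) x t c + peval dt x t c * peval (pdt e) x t c
     + peval dc x t c * peval (pdc e) x t c"
  by (induction e) (simp_all add: algebra_simps)

lemma has_real_derivative_peval:
  assumes "(a has_real_derivative a') (at s)" "(b has_real_derivative b') (at s)"
    and "(c has_real_derivative c') (at s)"
  shows "((\<lambda>s. peval e (a s) (b s) (c s)) has_real_derivative
           a' * peval (pdx e) (a s) (b s) (c s) + b' * peval (pdt e) (a s) (b s) (c s)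
           + c' * peval (pdc e) (a s) (b s) (c s)) (at s)"
  by (induction e) (use assms in \<open>auto intro!: derivative_eq_intros simp: algebra_simps\<close>)

lemma isCont_peval: "isCont (\<lambda>p. peval e (fst p) (snd p) c) p"
  by (induction e) (auto intro!: continuous_intros)

lemma isCont_peval_param: "isCont (\<lambda>t. peval e x t c) t0"
  by (induction e) (auto intro!: continuous_intros)

lemma peval_c_free: "c_free e \<Longrightarrow> peval e x t c = peval e x t c'"
  by (induction e) auto

lemma c_free_pexpr_deriv:
  "c_free dx \<Longrightarrow> c_free dt \<Longrightarrow> c_free e \<Longrightarrow> c_free (pexpr_deriv dx dt dc e)"
  by (induction e) auto

definition hadamard_expansion ::
    "pexpr \<Rightarrow> real \<Rightarrow> real \<Rightarrow> real \<Rightarrow> (real \<times> real \<Rightarrow> real) \<Rightarrow> (real \<times> real \<Rightarrow> real) \<Rightarrow> bool"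
  where "hadamard_expansion e c x0 t0 A B \<longleftrightarrow>
    (\<forall>x t. peval e x t c = peval e x0 t0 c + (x - x0) * A (x, t) + (t - t0) * B (x, t))
    \<and> isCont A (x0, t0) \<and> isCont B (x0, t0)
    \<and> A (x0, t0) = peval (pdx e) x0 t0 c \<and> B (x0, t0) = peval (pdt e) x0 t0 c"

lemma hadamard_expansionD:
  assumes "hadamard_expansion e c x0 t0 A B"
  shows "peval e x t c = peval e x0 t0 c + (x - x0) * A (x, t) + (t - t0) * B (x, t)"
    and "isCont A (x0, t0)" "isCont B (x0, t0)"
    and "A (x0, t0) = peval (pdx e) x0 t0 c" "B (x0, t0) = peval (pdt e) x0 t0 c"
  using assms unfolding hadamard_expansion_def by blast+

lemma hadamard_expansion_Add:
  assumes e1: "hadamard_expansion e1 c x0 t0 A1 B1" and e2: "hadamard_expansion e2 c x0 t0 A2 B2"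
  shows "hadamard_expansion (Add e1 e2) c x0 t0 (\<lambda>p. A1 p + A2 p) (\<lambda>p. B1 p + B2 p)"
proof -
  have expand: "peval (Add e1 e2) x t c = peval (Add e1 e2) x0 t0 c
      + (x - x0) * (A1 (x, t) + A2 (x, t)) + (t - t0) * (B1 (x, t) + B2 (x, t))" for x t
    by (simp add: hadamard_expansionD(1)[OF e1, of x t] hadamard_expansionD(1)[OF e2, of x t]
        algebra_simps)
  show ?thesis
    unfolding hadamard_expansion_def
    by (intro conjI allI expand isCont_add hadamard_expansionD(2,3)[OF e1] hadamard_expansionD(2,3)[OF e2])
      (simp_all add: hadamard_expansionD(4,5)[OF e1] hadamard_expansionD(4,5)[OF e2])
qed

lemma hadamard_expansion_Mul:
  assumes e1: "hadamard_expansion e1 c x0 t0 A1 B1" and e2: "hadamard_expansion e2 c x0 t0 A2 B2"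
  defines "v \<equiv> \<lambda>p. peval e2 (fst p) (snd p) c"
  shows "hadamard_expansion (Mul e1 e2) c x0 t0
    (\<lambda>p. A1 p * v p + peval e1 x0 t0 c * A2 p) (\<lambda>p. B1 p * v p + peval e1 x0 t0 c * B2 p)"
proof -
  \<comment> \<open>u v - u0 v0 = (u - u0) v + u0 (v - v0)\<close>
  have expand: "peval (Mul e1 e2) x t c = peval (Mul e1 e2) x0 t0 c
      + (x - x0) * (A1 (x, t) * v (x, t) + peval e1 x0 t0 c * A2 (x, t))
      + (t - t0) * (B1 (x, t) * v (x, t) + peval e1 x0 t0 c * B2 (x, t))" for x t
    by (simp add: hadamard_expansionD(1)[OF e1, of x t] hadamard_expansionD(1)[OF e2, of x t]
        v_def algebra_simps)
  have "isCont v (x0, t0)" unfolding v_def by (rule isCont_peval)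
  then show ?thesis
    unfolding hadamard_expansion_def
    by (intro conjI allI expand isCont_add isCont_mult continuous_const
        hadamard_expansionD(2,3)[OF e1] hadamard_expansionD(2,3)[OF e2])
      (simp_all add: hadamard_expansionD(4,5)[OF e1] hadamard_expansionD(4,5)[OF e2] v_def)
qed

lemma hadamard_expansion_exists: "\<exists>A B. hadamard_expansion e c x0 t0 A B"
proof (induction e)
  case (Add e1 e2)
  then show ?case using hadamard_expansion_Add by blast
next
  case (Mul e1 e2)
  then show ?case using hadamard_expansion_Mul by blast
qed (force simp: hadamard_expansion_def)+

lemma smooth_on_polynomial_ode:
  assumes S: "open S"
    and da: "\<And>t. t \<in> S \<Longrightarrow> (a has_real_derivative peval F (a t) t (c t)) (at t)"
    and dc: "\<And>t. t \<in> S \<Longrightarrow> (c has_real_derivative peval G (a t) t (c t)) (at t)"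
  shows "smooth_on a S"
proof -
  define D where "D = pexpr_deriv F (Const 1) G"
  have along: "((\<lambda>s. peval e (a s) s (c s)) has_real_derivative peval (D e) (a t) t (c t)) (at t)"
    if "t \<in> S" for e t
    using has_real_derivative_peval[OF da[OF that] DERIV_ident dc[OF that], of e]
    unfolding D_def peval_pexpr_deriv[of F "Const 1" G] by simp
  have step: "((deriv ^^ n) a has_real_derivative peval ((D ^^ Suc n) Vx) (a t) t (c t)) (at t)"
    if "\<forall>s\<in>S. (deriv ^^ n) a s = peval ((D ^^ n) Vx) (a s) s (c s)" "t \<in> S" for n t
  proof -
    have "((\<lambda>s. peval ((D ^^ n) Vx) (a s) s (c s)) has_real_derivative
        peval ((D ^^ Suc n) Vx) (a t) t (c t)) (at t)"
      using along[OF \<open>t \<in> S\<close>, of "(D ^^ n) Vx"] by simp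
    then show ?thesis
      by (rule has_field_derivative_transform_within_open[OF _ S \<open>t \<in> S\<close>]) (use that in auto)
  qed
  have iter: "\<forall>t\<in>S. (deriv ^^ n) a t = peval ((D ^^ n) Vx) (a t) t (c t)" for n
  proof (induction n)
    case (Suc n)
    then show ?case using step DERIV_imp_deriv by fastforce
  qed simp
  show ?thesis
    unfolding smooth_on_def real_differentiable_def using step[OF iter] by blast
qed

lemma implicit_has_real_derivative:
  assumes S: "open S" "t \<in> S"
    and zero: "\<And>s. s \<in> S \<Longrightarrow> peval e (a s) s c = 0"
    and cont: "isCont a t"
    and nz: "peval (pdx e) (a t) t c \<noteq> 0"
  shows "(a has_real_derivative - peval (pdt e) (a t) t c / peval (pdx e) (a t) t c) (at t)"
proof -
  obtain A B where AB: "hadamard_expansion e c (a t) t A B"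
    using hadamard_expansion_exists by blast
  note cA = hadamard_expansionD(2)[OF AB] and cB = hadamard_expansionD(3)[OF AB]
    and A = hadamard_expansionD(4)[OF AB] and B = hadamard_expansionD(5)[OF AB]
  have graph: "((\<lambda>s. (a s, s)) \<longlongrightarrow> (a t, t)) (at t)"
    using cont unfolding isCont_def by (intro tendsto_Pair tendsto_ident_at)
  have lim_A: "((\<lambda>s. A (a s, s)) \<longlongrightarrow> A (a t, t)) (at t)"
    using isCont_tendsto_compose[OF cA graph] .
  have lim_B: "((\<lambda>s. B (a s, s)) \<longlongrightarrow> B (a t, t)) (at t)"
    using isCont_tendsto_compose[OF cB graph] .
  have "A (a t, t) \<noteq> 0" using nz A by simp
  have "eventually (\<lambda>s. s \<in> S - {t} \<and> A (a s, s) \<noteq> 0) (at t)"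
    using eventually_at_in_open[OF S] tendsto_imp_eventually_ne[OF lim_A \<open>A (a t, t) \<noteq> 0\<close>]
    by (rule eventually_conj)
  then have "eventually (\<lambda>s. - B (a s, s) / A (a s, s) = (a s - a t) / (s - t)) (at t)"
  proof eventually_elim
    case (elim s)
    have "peval e (a s) s c = 0" "peval e (a t) t c = 0" using elim zero S(2) by auto
    with hadamard_expansionD(1)[OF AB, of "a s" s] have eq: "(a s - a t) * A (a s, s) = (s - t) * - B (a s, s)"
      by simp
    have "(a s - a t) / (s - t) = ((a s - a t) * A (a s, s)) / ((s - t) * A (a s, s))"
      by (rule nonzero_mult_divide_mult_cancel_right[symmetric]) (use elim in simp)
    also have "\<dots> = ((s - t) * - B (a s, s)) / ((s - t) * A (a s, s))" by (simp only: eq)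
    also have "\<dots> = - B (a s, s) / A (a s, s)"
      by (rule nonzero_mult_divide_mult_cancel_left) (use elim in simp)
    finally show ?case by (rule sym)
  qed
  then have "((\<lambda>s. (a s - a t) / (s - t)) \<longlongrightarrow> - B (a t, t) / A (a t, t)) (at t)"
    using tendsto_divide[OF tendsto_minus[OF lim_B] lim_A \<open>A (a t, t) \<noteq> 0\<close>]
    by (rule Lim_transform_eventually[rotated])
  then show ?thesis by (simp only: has_field_derivative_iff A [symmetric] B [symmetric])
qed

lemma smooth_on_implicit:
  assumes S: "open S" and E: "c_free E"
    and zero: "\<And>s. s \<in> S \<Longrightarrow> peval E (a s) s 0 = 0"
    and cont: "\<And>s. s \<in> S \<Longrightarrow> isCont a s"
    and nz: "\<And>s. s \<in> S \<Longrightarrow> peval (pdx E) (a s) s 0 \<noteq> 0"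
  shows "smooth_on a S"
proof -
  \<comment> \<open>With c = 1 / E_x(a, t): a' = - E_t(a, t) c and c' = - c^2 (E_xx(a, t) a' + E_xt(a, t))\<close>
  define c where "c s = inverse (peval (pdx E) (a s) s 0)" for s
  define F where "F = Mul (Const (-1)) (Mul (pdt E) Vc)"
  define G where "G = Mul (Const (-1)) (Mul (Mul Vc Vc) (Add (Mul F (pdx (pdx E))) (pdt (pdx E))))"
  have free: "c_free (pdt E)" "c_free (pdx (pdx E))" "c_free (pdt (pdx E))"
    using E by (simp_all add: c_free_pexpr_deriv)
  have da: "(a has_real_derivative peval F (a t) t (c t)) (at t)" if "t \<in> S" for t
    using implicit_has_real_derivative[OF S that zero cont[OF that] nz[OF that]]
      peval_c_free[OF free(1), of "a t" t 0 "c t"]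
    by (simp add: F_def c_def divide_inverse)
  have dc: "(c has_real_derivative peval G (a t) t (c t)) (at t)" if "t \<in> S" for t
  proof -
    have "((\<lambda>s. peval (pdx E) (a s) s 0) has_real_derivative
        peval F (a t) t (c t) * peval (pdx (pdx E)) (a t) t 0 + peval (pdt (pdx E)) (a t) t 0) (at t)"
      using has_real_derivative_peval[where c="\<lambda>_. 0", OF da[OF that] DERIV_ident DERIV_const]
      by simp
    then have "(c has_real_derivative
        - ((peval F (a t) t (c t) * peval (pdx (pdx E)) (a t) t 0 + peval (pdt (pdx E)) (a t) t 0)
           * inverse (peval (pdx E) (a t) t 0 ^ Suc (Suc 0)))) (at t)"
      unfolding c_def using nz[OF that] by (rule DERIV_inverse_fun)
    moreover have "peval (pdx (pdx E)) (a t) t (c t) = peval (pdx (pdx E)) (a t) t 0"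
      "peval (pdt (pdx E)) (a t) t (c t) = peval (pdt (pdx E)) (a t) t 0"
      using free(2,3) by (simp_all add: peval_c_free[of _ _ _ "c t" 0])
    ultimately show ?thesis
      by (simp add: G_def c_def power2_eq_square inverse_mult_distrib algebra_simps)
  qed
  show ?thesis by (rule smooth_on_polynomial_ode[OF S da dc])
qed

lemma prod_diff_sign:
  fixes r :: "nat \<Rightarrow> real"
  assumes "finite A" "\<And>j. j \<in> A \<Longrightarrow> x \<noteq> r j"
  shows "0 < (-1) ^ card {j\<in>A. x < r j} * (\<Prod>j\<in>A. x - r j)"
  using assms
proof (induction A rule: finite_induct)
  case (insert a A)
  then have IH: "0 < (-1) ^ card {j\<in>A. x < r j} * (\<Prod>j\<in>A. x - r j)" by auto
  show ?case
  proof (cases "x < r a")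
    case True
    then have "{j\<in>insert a A. x < r j} = insert a {j\<in>A. x < r j}" by auto
    with insert have "(-1) ^ card {j\<in>insert a A. x < r j} * (\<Prod>j\<in>insert a A. x - r j)
        = ((-1) ^ card {j\<in>A. x < r j} * (\<Prod>j\<in>A. x - r j)) * (r a - x)"
      by (simp add: algebra_simps)
    with IH True show ?thesis by simp
  next
    case False
    with insert.prems have "r a < x" by force
    moreover from False have "{j\<in>insert a A. x < r j} = {j\<in>A. x < r j}" by auto
    with insert have "(-1) ^ card {j\<in>insert a A. x < r j} * (\<Prod>j\<in>insert a A. x - r j)
        = ((-1) ^ card {j\<in>A. x < r j} * (\<Prod>j\<in>A. x - r j)) * (x - r a)"
      by (simp add: algebra_simps)
    ultimately show ?thesis using IH by simp
  qed
qed simp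

lemma prod_diff_sign_change:
  fixes r :: "nat \<Rightarrow> real"
  assumes "finite A" "i \<in> A" "0 < \<delta>" "\<And>k. k \<in> A \<Longrightarrow> k \<noteq> i \<Longrightarrow> \<delta> < \<bar>r i - r k\<bar>"
  shows "(\<Prod>k\<in>A. r i - \<delta> - r k) * (\<Prod>k\<in>A. r i + \<delta> - r k) < 0"
proof -
  have "(\<Prod>k\<in>A. r i - \<delta> - r k) * (\<Prod>k\<in>A. r i + \<delta> - r k) = (\<Prod>k\<in>A. (r i - r k)\<^sup>2 - \<delta>\<^sup>2)"
    by (simp add: prod.distrib[symmetric] power2_eq_square algebra_simps)
  also have "\<dots> = - \<delta>\<^sup>2 * (\<Prod>k\<in>A - {i}. (r i - r k)\<^sup>2 - \<delta>\<^sup>2)"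
    using assms(1,2) by (simp add: prod.remove)
  also have "\<dots> < 0"
  proof (rule mult_neg_pos)
    show "- \<delta>\<^sup>2 < 0" using assms(3) by simp
    show "0 < (\<Prod>k\<in>A - {i}. (r i - r k)\<^sup>2 - \<delta>\<^sup>2)"
    proof (rule prod_pos)
      fix k assume "k \<in> A - {i}"
      then show "0 < (r i - r k)\<^sup>2 - \<delta>\<^sup>2"
        using power_strict_mono[of \<delta> "\<bar>r i - r k\<bar>" 2] assms(3) assms(4)[of k] by simp
    qed
  qed
  finally show ?thesis .
qed

lemma has_real_derivative_prod_diff:
  fixes r :: "nat \<Rightarrow> real"
  assumes "finite A" "i \<in> A"
  shows "((\<lambda>x. \<Prod>k\<in>A. x - r k) has_real_derivative (\<Prod>k\<in>A - {i}. r i - r k)) (at (r i))"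
proof -
  have "(\<Prod>k\<in>A. x - r k) = (x - r i) * (\<Prod>k\<in>A - {i}. x - r k)" for x
    using assms by (simp add: prod.remove)
  then show ?thesis
    by (subst CARAT_DERIV) (auto intro!: exI[of _ "\<lambda>x. \<Prod>k\<in>A - {i}. x - r k"] continuous_intros)
qed

lemma monic_poly_eq_prod_roots:
  fixes p :: "real poly"
  assumes "degree p = n" "lead_coeff p = 1" "strict_mono_on {..<n} r"
    and "\<And>j. j < n \<Longrightarrow> poly p (r j) = 0"
  shows "poly p x = (\<Prod>j<n. x - r j)"
proof -
  define q where "q = (\<Prod>j<n. [:- r j, 1:])"
  have "degree q = n" by (simp add: q_def degree_prod_eq_sum_degree)
  have "lead_coeff q = 1" unfolding q_def lead_coeff_prod by simp
  have "p - q = 0"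
  proof (rule ccontr)
    assume nz: "p - q \<noteq> 0"
    have "degree (p - q) < n"
    proof -
      have "degree (p - q) \<le> n" using assms(1) \<open>degree q = n\<close> by (simp add: degree_diff_le)
      moreover have "coeff (p - q) n = 0" using assms(1,2) \<open>degree q = n\<close> \<open>lead_coeff q = 1\<close> by simp
      ultimately show ?thesis using nz by (metis le_neq_implies_less leading_coeff_0_iff)
    qed
    moreover have "r ` {..<n} \<subseteq> {x. poly (p - q) x = 0}"
      using assms(4) by (auto simp: q_def poly_prod)
    then have "card (r ` {..<n}) \<le> card {x. poly (p - q) x = 0}"
      using nz by (intro card_mono poly_roots_finite)
    moreover have "card (r ` {..<n}) = n"
      using assms(3) by (simp add: card_image strict_mono_on_imp_inj_on)
    ultimately show False using card_poly_roots_bound[OF nz] by linarith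
  qed
  then show ?thesis by (simp add: q_def poly_prod)
qed

lemma sorted_list_of_set_strict_mono_on:
  fixes f :: "nat \<Rightarrow> 'a::linorder"
  assumes "strict_mono_on {..<n} f"
  shows "sorted_list_of_set (f ` {..<n}) = map f [0..<n]"
  using assms
  by (subst sorted_list_of_set_unique[symmetric])
    (auto simp: sorted_wrt_iff_nth_less card_image strict_mono_on_imp_inj_on strict_mono_onD)

lemma strict_mono_on_image_subset_eq:
  fixes f g :: "nat \<Rightarrow> 'a::linorder"
  assumes f: "strict_mono_on {..<n} f" and g: "strict_mono_on {..<n} g"
    and sub: "f ` {..<n} \<subseteq> g ` {..<n}" and "i < n"
  shows "f i = g i"
proof -
  have "card (f ` {..<n}) = card (g ` {..<n})"
    unfolding card_image[OF strict_mono_on_imp_inj_on[OF f]] card_image[OF strict_mono_on_imp_inj_on[OF g]] ..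
  with sub have eq: "f ` {..<n} = g ` {..<n}"
    by (rule card_subset_eq[OF finite_imageI[OF finite_lessThan]])
  have "map f [0..<n] = sorted_list_of_set (f ` {..<n})"
    by (rule sorted_list_of_set_strict_mono_on[OF f, symmetric])
  also have "\<dots> = map g [0..<n]"
    unfolding eq by (rule sorted_list_of_set_strict_mono_on[OF g])
  finally show ?thesis using \<open>i < n\<close> by (simp add: map_eq_conv)
qed

lemma IVT_strict:
  fixes f :: "real \<Rightarrow> real"
  assumes "a < b" "f a * f b < 0" "\<And>x. isCont f x"
  shows "\<exists>x. a < x \<and> x < b \<and> f x = 0"
proof -
  have cont: "continuous_on {a..b} f" by (simp add: assms(3) continuous_at_imp_continuous_on)
  from assms(2) consider "f a \<le> 0" "0 \<le> f b" | "f b \<le> 0" "0 \<le> f a"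
    by (auto simp: mult_less_0_iff)
  then obtain x where "a \<le> x" "x \<le> b" "f x = 0"
  proof cases
    case 1
    then show ?thesis using IVT'[OF 1 _ cont] assms(1) that by auto
  next
    case 2
    then show ?thesis using IVT2'[OF 2 _ cont] assms(1) that by auto
  qed
  moreover have "x \<noteq> a" "x \<noteq> b" using assms(2) \<open>f x = 0\<close> by auto
  ultimately show ?thesis by (intro exI[of _ x]) auto
qed

lemma alternating_signs_mult_neg:
  fixes u v :: real
  assumes "0 < (-1) ^ Suc n * u" "0 < (-1) ^ n * v"
  shows "u * v < 0"
  using assms by (cases "even n") (auto simp: mult_less_0_iff)

lemma alternating_signs_roots:
  fixes f :: "real \<Rightarrow> real"
  assumes cont: "\<And>x. isCont f x" and y: "\<And>i. i < m \<Longrightarrow> y i < y (Suc i)"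
    and sgn: "\<And>i. i \<le> m \<Longrightarrow> 0 < (-1) ^ (m - i) * f (y i)"
  shows "\<exists>s. strict_mono_on {..<m} s \<and> (\<forall>i<m. y i < s i \<and> s i < y (Suc i) \<and> f (s i) = 0)"
proof -
  have "\<forall>i\<in>{..<m}. \<exists>x. y i < x \<and> x < y (Suc i) \<and> f x = 0"
  proof
    fix i assume "i \<in> {..<m}"
    then have "i < m" by simp
    show "\<exists>x. y i < x \<and> x < y (Suc i) \<and> f x = 0"
    proof (rule IVT_strict[OF y[OF \<open>i < m\<close>] alternating_signs_mult_neg cont])
      show "0 < (-1) ^ Suc (m - Suc i) * f (y i)" using sgn[of i] \<open>i < m\<close> by (simp add: Suc_diff_Suc)
      show "0 < (-1) ^ (m - Suc i) * f (y (Suc i))" using sgn[of "Suc i"] \<open>i < m\<close> by simp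
    qed
  qed
  then obtain s where "\<forall>i\<in>{..<m}. y i < s i \<and> s i < y (Suc i) \<and> f (s i) = 0"
    by (rule bchoice[THEN exE])
  then have s: "\<And>i. i < m \<Longrightarrow> y i < s i \<and> s i < y (Suc i) \<and> f (s i) = 0" by simp
  have "strict_mono_on {..<m} s"
  proof (rule strict_mono_onI)
    fix i j assume "i \<in> {..<m}" "j \<in> {..<m}" "i < j"
    have "y (Suc i) \<le> y j"
    proof (cases "Suc i = j")
      case False
      show ?thesis
        by (rule less_imp_le, rule lift_Suc_mono_less_ivl[of "{..<m}" y])
          (use False \<open>i < j\<close> \<open>j \<in> {..<m}\<close> y in auto)
    qed simp
    with s[of i] s[of j] \<open>j \<in> {..<m}\<close> \<open>i < j\<close> show "s i < s j" by fastforce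
  qed
  with s show ?thesis by blast
qed

lemma separation_radius:
  fixes A :: "real set"
  assumes "finite A" "0 < \<epsilon>"
  shows "\<exists>\<delta>>0. \<delta> \<le> \<epsilon> \<and> (\<forall>x\<in>A. \<forall>y\<in>A. x \<noteq> y \<longrightarrow> 2 * \<delta> < \<bar>x - y\<bar>)"
proof -
  define D where "D = (\<lambda>(x, y). \<bar>x - y\<bar> / 3) ` {p \<in> A \<times> A. fst p \<noteq> snd p}"
  have D: "finite D" "\<forall>d\<in>D. 0 < d" using assms(1) by (auto simp: D_def)
  define \<delta> where "\<delta> = Min (insert \<epsilon> D)"
  have "0 < \<delta>" using D assms(2) by (simp add: \<delta>_def)
  moreover have "\<delta> \<le> \<epsilon>" using D by (simp add: \<delta>_def)
  moreover have "2 * \<delta> < \<bar>x - y\<bar>" if "x \<in> A" "y \<in> A" "x \<noteq> y" for x y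
  proof -
    have "\<delta> \<le> \<bar>x - y\<bar> / 3"
      unfolding \<delta>_def using D that by (intro Min_le) (auto simp: D_def image_iff)
    then show ?thesis using that by simp
  qed
  ultimately show ?thesis by blast
qed

lemma sorted_roots_near_sign_changes:
  fixes \<rho> r :: "nat \<Rightarrow> real" and p :: "real \<Rightarrow> real"
  assumes \<rho>: "strict_mono_on {..<n} \<rho>" and p: "\<And>x. p x = (\<Prod>k<n. x - \<rho> k)"
    and "0 < \<delta>" and gap: "\<And>i k. i < k \<Longrightarrow> k < n \<Longrightarrow> r i + \<delta> < r k - \<delta>"
    and change: "\<And>i. i < n \<Longrightarrow> p (r i - \<delta>) * p (r i + \<delta>) < 0" and "j < n"
  shows "\<bar>\<rho> j - r j\<bar> < \<delta>"
proof -
  have "p = (\<lambda>x. \<Prod>k<n. x - \<rho> k)" using p by blast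
  then have cont: "isCont p x" for x by (simp add: continuous_intros)
  have "\<forall>i\<in>{..<n}. \<exists>x. r i - \<delta> < x \<and> x < r i + \<delta> \<and> p x = 0"
    using IVT_strict[OF _ change cont] \<open>0 < \<delta>\<close> by simp
  then obtain g where "\<forall>i\<in>{..<n}. r i - \<delta> < g i \<and> g i < r i + \<delta> \<and> p (g i) = 0"
    by (rule bchoice[THEN exE])
  then have g: "\<And>i. i < n \<Longrightarrow> r i - \<delta> < g i \<and> g i < r i + \<delta> \<and> p (g i) = 0"
    by simp
  have "strict_mono_on {..<n} g"
  proof (rule strict_mono_onI)
    fix i k assume "i \<in> {..<n}" "k \<in> {..<n}" "i < k"
    then have "g i < r i + \<delta>" "r i + \<delta> < r k - \<delta>" "r k - \<delta> < g k"
      using g[of i] g[of k] gap[of i k] by auto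
    then show "g i < g k" by linarith
  qed
  moreover have "g i \<in> \<rho> ` {..<n}" if "i < n" for i
  proof -
    have "(\<Prod>k<n. g i - \<rho> k) = 0" using g[OF that] by (simp add: p)
    then obtain k where "k < n" "g i = \<rho> k" by (auto simp: prod_zero_iff)
    then show ?thesis by blast
  qed
  ultimately have "g j = \<rho> j"
    using strict_mono_on_image_subset_eq[OF _ \<rho> _ \<open>j < n\<close>] by blast
  then show ?thesis using g[OF \<open>j < n\<close>] by (simp add: abs_less_iff)
qed

lemma isCont_sorted_roots:
  fixes P :: "real \<Rightarrow> real \<Rightarrow> real" and \<rho> :: "real \<Rightarrow> nat \<Rightarrow> real"
  assumes S: "open S" "t \<in> S" and j: "j < n"
    and mono: "\<And>s. s \<in> S \<Longrightarrow> strict_mono_on {..<n} (\<rho> s)"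
    and roots: "\<And>s x. s \<in> S \<Longrightarrow> P x s = (\<Prod>k<n. x - \<rho> s k)"
    and cont: "\<And>x. isCont (P x) t"
  shows "isCont (\<lambda>s. \<rho> s j) t"
  unfolding isCont_def tendsto_iff
proof (intro allI impI)
  fix \<epsilon> :: real assume "0 < \<epsilon>"
  let ?r = "\<rho> t"
  obtain \<delta> where \<delta>: "0 < \<delta>" "\<delta> \<le> \<epsilon>"
    and sep: "\<forall>x\<in>?r ` {..<n}. \<forall>y\<in>?r ` {..<n}. x \<noteq> y \<longrightarrow> 2 * \<delta> < \<bar>x - y\<bar>"
    using separation_radius[of "?r ` {..<n}" \<epsilon>] \<open>0 < \<epsilon>\<close> by auto
  have gap: "?r i + \<delta> < ?r k - \<delta>" if "i < k" "k < n" for i k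
  proof -
    have "?r i < ?r k" using strict_mono_onD[OF mono[OF S(2)], of i k] that by simp
    moreover have "2 * \<delta> < \<bar>?r i - ?r k\<bar>"
      by (rule sep[rule_format]) (use that \<open>?r i < ?r k\<close> in auto)
    ultimately show ?thesis by simp
  qed
  have "P (?r i - \<delta>) t * P (?r i + \<delta>) t < 0" if "i < n" for i
  proof -
    have "\<delta> < \<bar>?r i - ?r k\<bar>" if "k < n" "k \<noteq> i" for k
      using gap[of i k] gap[of k i] that \<open>i < n\<close> \<delta> by (cases "i < k") auto
    then show ?thesis
      using prod_diff_sign_change[of "{..<n}" i \<delta> ?r] that \<delta> by (simp add: roots[OF S(2)])
  qed
  then have "eventually (\<lambda>s. s \<in> S \<and> (\<forall>i\<in>{..<n}. P (?r i - \<delta>) s * P (?r i + \<delta>) s < 0)) (at t)"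
    using cont
    by (intro eventually_conj eventually_at_in_open'[OF S] eventually_ball_finite ballI
        order_tendstoD(2)[OF tendsto_mult]) (auto simp: isCont_def)
  then show "eventually (\<lambda>s. dist (\<rho> s j) (\<rho> t j) < \<epsilon>) (at t)"
  proof eventually_elim
    case (elim s)
    then have "s \<in> S" by simp
    with elim have "\<bar>\<rho> s j - ?r j\<bar> < \<delta>"
      by (intro sorted_roots_near_sign_changes[where p="\<lambda>x. P x s",
            OF mono[OF \<open>s \<in> S\<close>] roots[OF \<open>s \<in> S\<close>] \<delta>(1) gap _ j]) auto
    then show ?case using \<delta> by (simp add: dist_real_def)
  qed
qed

lemma smooth_on_sorted_roots:
  fixes \<rho> :: "real \<Rightarrow> nat \<Rightarrow> real"
  assumes S: "open S" and E: "c_free E" and j: "j < n"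
    and mono: "\<And>s. s \<in> S \<Longrightarrow> strict_mono_on {..<n} (\<rho> s)"
    and roots: "\<And>s x. s \<in> S \<Longrightarrow> peval E x s 0 = (\<Prod>k<n. x - \<rho> s k)"
  shows "smooth_on (\<lambda>s. \<rho> s j) S"
proof (rule smooth_on_implicit[OF S E])
  fix s assume s: "s \<in> S"
  show "peval E (\<rho> s j) s 0 = 0" using j by (auto simp: roots[OF s] prod_zero_iff)
  show "isCont (\<lambda>s. \<rho> s j) s"
    by (rule isCont_sorted_roots[OF S(1) s j mono roots isCont_peval_param])
  have "((\<lambda>x. peval E x s 0) has_real_derivative peval (pdx E) (\<rho> s j) s 0) (at (\<rho> s j))"
    using has_real_derivative_peval[where a="\<lambda>x. x" and b="\<lambda>_. s" and c="\<lambda>_. 0",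
        OF DERIV_ident DERIV_const DERIV_const]
    by simp
  moreover have "((\<lambda>x. peval E x s 0) has_real_derivative (\<Prod>k\<in>{..<n} - {j}. \<rho> s j - \<rho> s k))
      (at (\<rho> s j))"
    using has_real_derivative_prod_diff[of "{..<n}" j "\<rho> s"] j by (simp add: roots[OF s])
  ultimately have "peval (pdx E) (\<rho> s j) s 0 = (\<Prod>k\<in>{..<n} - {j}. \<rho> s j - \<rho> s k)"
    by (rule DERIV_unique)
  also have "\<dots> \<noteq> 0"
    using strict_mono_on_eq[OF mono[OF s]] j by (auto simp: prod_zero_iff)
  finally show "peval (pdx E) (\<rho> s j) s 0 \<noteq> 0" .
qed

lemma det_tridiagonal_Suc_Suc:
  fixes F :: "nat \<Rightarrow> nat \<Rightarrow> 'a::comm_ring_1"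
  assumes up: "\<And>i j. i + 1 < j \<Longrightarrow> F i j = 0"
    and lo: "\<And>i j. j + 1 < i \<Longrightarrow> F i j = 0"
  shows "det (mat (Suc (Suc n)) (Suc (Suc n)) (\<lambda>(i,j). F i j)) =
     F (Suc n) (Suc n) * det (mat (Suc n) (Suc n) (\<lambda>(i,j). F i j))
     - F (Suc n) n * F n (Suc n) * det (mat n n (\<lambda>(i,j). F i j))"
proof -
  define A where "A = mat (Suc (Suc n)) (Suc (Suc n)) (\<lambda>(i,j). F i j)"
  have "det A = (\<Sum>j<Suc (Suc n). A $$ (Suc n, j) * cofactor A (Suc n) j)"
    by (rule laplace_expansion_row) (simp_all add: A_def)
  also have "\<dots> = A $$ (Suc n, n) * cofactor A (Suc n) n + A $$ (Suc n, Suc n) * cofactor A (Suc n) (Suc n)"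
    by (simp add: A_def lo)
  finally have det_A: "det A = \<dots>" .
  have "mat_delete A (Suc n) (Suc n) = mat (Suc n) (Suc n) (\<lambda>(i,j). F i j)"
    by (rule eq_matI) (auto simp: A_def mat_delete_def)
  moreover have "cofactor A (Suc n) n = - F n (Suc n) * det (mat n n (\<lambda>(i,j). F i j))"
  proof -
    define B where "B = mat_delete A (Suc n) n"
    have B: "B = mat (Suc n) (Suc n) (\<lambda>(i,j). F i (if j < n then j else Suc j))"
      by (rule eq_matI) (auto simp: A_def B_def mat_delete_def)
    \<comment> \<open>the last column of B has the single nonzero entry F n (Suc n)\<close>
    have "det B = (\<Sum>i<Suc n. B $$ (i, n) * cofactor B i n)"
      by (rule laplace_expansion_column) (simp_all add: B)
    also have "\<dots> = B $$ (n, n) * cofactor B n n"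
      by (simp add: B up)
    finally have "det B = B $$ (n, n) * cofactor B n n" .
    moreover have "mat_delete B n n = mat n n (\<lambda>(i,j). F i j)"
      by (rule eq_matI) (auto simp: B mat_delete_def)
    ultimately have "det B = F n (Suc n) * det (mat n n (\<lambda>(i,j). F i j))"
      by (simp add: B cofactor_def)
    then show ?thesis by (simp add: cofactor_def B_def[symmetric])
  qed
  ultimately show ?thesis
    using det_A by (simp add: A_def cofactor_def algebra_simps)
qed

fun tridiag_poly :: "(nat \<Rightarrow> real) \<Rightarrow> (nat \<Rightarrow> real) \<Rightarrow> nat \<Rightarrow> real poly" where
  "tridiag_poly a b 0 = 1"
| "tridiag_poly a b (Suc 0) = [:- a 0, 1:]"
| "tridiag_poly a b (Suc (Suc k)) =
     [:- a (Suc k), 1:] * tridiag_poly a b (Suc k) - Polynomial.smult (b (Suc k)) (tridiag_poly a b k)"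

lemma det_tridiagonal_eq_tridiag_poly:
  fixes F :: "nat \<Rightarrow> nat \<Rightarrow> real"
  assumes "\<And>i j. i + 1 < j \<Longrightarrow> F i j = 0" "\<And>i j. j + 1 < i \<Longrightarrow> F i j = 0"
    and diag: "\<And>i. F i i = x - a i" and off: "\<And>i. F (Suc i) i * F i (Suc i) = b (Suc i)"
  shows "det (mat k k (\<lambda>(i,j). F i j)) = poly (tridiag_poly a b k) x"
proof (induction k rule: induct_nat_012)
  case 1
  show ?case using det_single[of "mat 1 1 (\<lambda>(i,j). F i j)"] by (simp add: diag)
next
  case (ge2 k)
  have "F k (Suc k) * F (Suc k) k = b (Suc k)" using off[of k] by (simp only: mult.commute)
  with ge2 show ?case
    by (simp add: det_tridiagonal_Suc_Suc[OF assms(1,2)] diag algebra_simps)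
qed simp

lemma tridiag_poly_monic: "degree (tridiag_poly a b k) = k \<and> lead_coeff (tridiag_poly a b k) = 1"
proof (induction a b k rule: tridiag_poly.induct)
  case (3 a b k)
  then have IH: "degree (tridiag_poly a b (Suc k)) = Suc k" "coeff (tridiag_poly a b (Suc k)) (Suc k) = 1"
    by auto
  let ?q = "[:- a (Suc k), 1:] * tridiag_poly a b (Suc k)"
  have "tridiag_poly a b (Suc k) \<noteq> 0" using IH by auto
  then have "degree ?q = Suc (Suc k)"
    using IH by (subst degree_mult_eq) simp_all
  moreover have "lead_coeff ?q = 1"
    using IH by (subst lead_coeff_mult) simp
  ultimately have q: "degree ?q = Suc (Suc k)" "lead_coeff ?q = 1" by blast+
  let ?r = "Polynomial.smult (b (Suc k)) (tridiag_poly a b k)"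
  have r: "degree ?r < Suc (Suc k)"
    using 3 degree_smult_le[of "b (Suc k)" "tridiag_poly a b k"] by simp
  have "degree (?q - ?r) = Suc (Suc k)"
    unfolding diff_conv_add_uminus using q(1) r by (subst degree_add_eq_left) simp_all
  moreover have "coeff (?q - ?r) (Suc (Suc k)) = 1"
  proof -
    have "coeff ?q (Suc (Suc k)) = 1" using q(2) unfolding q(1) .
    moreover have "coeff ?r (Suc (Suc k)) = 0" using r by (rule coeff_eq_0)
    ultimately show ?thesis unfolding coeff_diff by simp
  qed
  moreover have "tridiag_poly a b (Suc (Suc k)) = ?q - ?r" by simp
  ultimately show ?case by simp
qed auto

lemma poly_signs_at_infinity:
  fixes p :: "real poly"
  assumes "0 < lead_coeff p"
  obtains X0 X1 where "\<And>x. x \<le> X0 \<Longrightarrow> 0 < (-1) ^ degree p * poly p x"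
    and "\<And>x. X1 \<le> x \<Longrightarrow> 0 < poly p x"
proof -
  obtain X1 where X1: "\<forall>x\<ge>X1. lead_coeff p \<le> poly p x"
    using poly_pinfty_gt_lc[OF assms] by blast
  \<comment> \<open>the behaviour at -\<infinity> is that of the reflected polynomial at +\<infinity>\<close>
  define q where "q = Polynomial.smult ((-1) ^ degree p) (pcompose p [:0, -1:])"
  have "degree q = degree p" by (simp add: q_def degree_pcompose)
  then have "lead_coeff q = (-1) ^ degree p * lead_coeff (pcompose p [:0, -1:])"
    by (simp add: q_def degree_pcompose)
  also have "\<dots> = lead_coeff p"
    by (subst lead_coeff_comp) (simp_all flip: power_mult_distrib)
  finally have "lead_coeff q = lead_coeff p" .
  with assms obtain X where X: "\<forall>x\<ge>X. lead_coeff p \<le> poly q x"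
    using poly_pinfty_gt_lc[of q] by auto
  have "0 < (-1) ^ degree p * poly p x" if "x \<le> - X" for x
    using X[rule_format, of "- x"] that assms by (simp add: q_def poly_pcompose)
  moreover have "0 < poly p x" if "X1 \<le> x" for x
    using X1 that assms by force
  ultimately show thesis using that by blast
qed

lemma monic_poly_interlacing_roots:
  fixes p :: "real poly"
  assumes deg: "degree p = Suc k" and monic: "lead_coeff p = 1" and r: "strict_mono_on {..<k} r"
    and sgn: "\<And>i. i < k \<Longrightarrow> 0 < (-1) ^ (k - i) * poly p (r i)"
  shows "\<exists>s. strict_mono_on {..<Suc k} s \<and> (\<forall>x. poly p x = (\<Prod>j<Suc k. x - s j))
           \<and> (\<forall>i<k. s i < r i \<and> r i < s (Suc i))"
proof -
  obtain X0 X1 where X0: "\<And>x. x \<le> X0 \<Longrightarrow> 0 < (-1) ^ Suc k * poly p x"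
    and X1: "\<And>x. X1 \<le> x \<Longrightarrow> 0 < poly p x"
    using poly_signs_at_infinity[of p] monic deg by auto
  \<comment> \<open>p alternates in sign at lo < r 0 < ... < r (k - 1) < hi\<close>
  define lo where "lo = min X0 (r 0 - 1)"
  define hi where "hi = max X1 (r (k - 1) + 1)"
  define y where "y i = (if i = 0 then lo else if i \<le> k then r (i - 1) else hi)" for i
  have "y i < y (Suc i)" if i: "i < Suc k" for i
  proof -
    consider "i = 0" "k = 0" | "i = 0" "0 < k" | "0 < i" "i < k" | "0 < i" "i = k"
      by (cases "i = 0"; cases "i = k") (use i in auto)
    then show ?thesis
    proof cases
      case 3
      then show ?thesis using strict_mono_onD[OF r, of "i - 1" i] by (simp add: y_def)
    qed (auto simp: y_def lo_def hi_def)
  qed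
  moreover have "0 < (-1) ^ (Suc k - i) * poly p (y i)" if i: "i \<le> Suc k" for i
  proof -
    consider "i = 0" | "0 < i" "i \<le> k" | "i = Suc k" using i by linarith
    then show ?thesis
    proof cases
      case 2
      then have "Suc k - i = k - (i - 1)" by simp
      with 2 show ?thesis using sgn[of "i - 1"] by (simp add: y_def)
    qed (use X0 X1 in \<open>auto simp: y_def lo_def hi_def\<close>)
  qed
  ultimately obtain s where s: "strict_mono_on {..<Suc k} s"
    and s_loc: "\<And>i. i < Suc k \<Longrightarrow> y i < s i \<and> s i < y (Suc i) \<and> poly p (s i) = 0"
    using alternating_signs_roots[of "poly p" "Suc k" y] by auto
  have "poly p x = (\<Prod>j<Suc k. x - s j)" for x
    using monic_poly_eq_prod_roots[OF deg monic s] s_loc by blast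
  moreover have "s i < r i \<and> r i < s (Suc i)" if "i < k" for i
    using s_loc[of i] s_loc[of "Suc i"] that by (simp add: y_def)
  ultimately show ?thesis using s by blast
qed

(* The sign condition on p_(k-1) at the roots of p_k says that the roots of p_(k-1)
   separate those of p_k. *)
definition interlaced_roots :: "(nat \<Rightarrow> real) \<Rightarrow> (nat \<Rightarrow> real) \<Rightarrow> nat \<Rightarrow> (nat \<Rightarrow> real) \<Rightarrow> bool" where
  "interlaced_roots a b k r \<longleftrightarrow> strict_mono_on {..<k} r
     \<and> (\<forall>x. poly (tridiag_poly a b k) x = (\<Prod>j<k. x - r j))
     \<and> (\<forall>i<k. 0 < (-1) ^ (k - 1 - i) * poly (tridiag_poly a b (k - 1)) (r i))"

lemma interlaced_roots_Suc:
  assumes b: "0 < b k" and k: "0 < k" and r: "interlaced_roots a b k r"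
  shows "\<exists>s. interlaced_roots a b (Suc k) s"
proof -
  let ?p = "tridiag_poly a b"
  from r have r_mono: "strict_mono_on {..<k} r" and r_prod: "\<And>x. poly (?p k) x = (\<Prod>j<k. x - r j)"
    and r_sgn: "\<And>i. i < k \<Longrightarrow> 0 < (-1) ^ (k - 1 - i) * poly (?p (k - 1)) (r i)"
    by (auto simp: interlaced_roots_def)
  obtain m where m: "k = Suc m" using k by (cases k) auto
  have "0 < (-1) ^ (k - i) * poly (?p (Suc k)) (r i)" if "i < k" for i
  proof -
    have "poly (?p k) (r i) = 0" using that by (auto simp: r_prod prod_zero_iff)
    moreover have "k - i = Suc (m - i)" using that m by simp
    ultimately have "(-1) ^ (k - i) * poly (?p (Suc k)) (r i)
        = b k * ((-1) ^ (k - 1 - i) * poly (?p (k - 1)) (r i))"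
      using m by simp
    then show ?thesis using r_sgn[OF that] b by simp
  qed
  then obtain s where s_mono: "strict_mono_on {..<Suc k} s"
    and s_prod: "\<And>x. poly (?p (Suc k)) x = (\<Prod>j<Suc k. x - s j)"
    and between: "\<And>i. i < k \<Longrightarrow> s i < r i \<and> r i < s (Suc i)"
    using monic_poly_interlacing_roots[of "?p (Suc k)" k r] tridiag_poly_monic r_mono by blast
  have "0 < (-1) ^ (k - i) * poly (?p k) (s i)" if "i < Suc k" for i
  proof -
    have less: "s i < r j" if "i \<le> j" "j < k" for j
      using between[of i] strict_mono_on_leD[OF r_mono, of i j] that by fastforce
    have greater: "r j < s i" if "j < i" "j < k" for j
      using between[of j] strict_mono_on_leD[OF s_mono, of "Suc j" i] that \<open>i < Suc k\<close> by fastforce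
    have "{j\<in>{..<k}. s i < r j} = {i..<k}"
      using less greater by (auto simp: not_less) (meson not_less less_asym)
    moreover have "s i \<noteq> r j" if "j < k" for j
      using less[of j] greater[of j] that by (cases "i \<le> j") auto
    ultimately show ?thesis
      using prod_diff_sign[of "{..<k}" "s i" r] by (simp add: r_prod)
  qed
  then show ?thesis
    using s_mono s_prod unfolding interlaced_roots_def by auto
qed

lemma tridiag_poly_real_roots:
  assumes "\<And>k. 0 < k \<Longrightarrow> k < n \<Longrightarrow> 0 < b k"
  shows "\<exists>r. strict_mono_on {..<n} r \<and> (\<forall>x. poly (tridiag_poly a b n) x = (\<Prod>j<n. x - r j))"
proof (cases n)
  case (Suc m)
  have "\<exists>r. interlaced_roots a b (Suc k) r" if "k \<le> m" for k
    using that
  proof (induction k)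
    case 0
    show ?case by (rule exI[of _ "\<lambda>_. a 0"]) (auto simp: interlaced_roots_def intro: strict_mono_onI)
  next
    case (Suc k)
    then obtain r where "interlaced_roots a b (Suc k) r" by auto
    moreover have "0 < b (Suc k)" using assms \<open>n = Suc m\<close> Suc.prems by simp
    ultimately show ?case using interlaced_roots_Suc by blast
  qed
  then obtain r where "interlaced_roots a b (Suc m) r" by blast
  then show ?thesis unfolding \<open>n = Suc m\<close> interlaced_roots_def by blast
qed simp

fun tridiag_pexpr :: "(nat \<Rightarrow> real) \<Rightarrow> (nat \<Rightarrow> pexpr) \<Rightarrow> nat \<Rightarrow> pexpr" where
  "tridiag_pexpr a B 0 = Const 1"
| "tridiag_pexpr a B (Suc 0) = Add Vx (Const (- a 0))"
| "tridiag_pexpr a B (Suc (Suc k)) =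
     Add (Mul (Add Vx (Const (- a (Suc k)))) (tridiag_pexpr a B (Suc k)))
       (Mul (Const (-1)) (Mul (B (Suc k)) (tridiag_pexpr a B k)))"

lemma peval_tridiag_pexpr:
  "peval (tridiag_pexpr a B k) x t c = poly (tridiag_poly a (\<lambda>k. peval (B k) x t c) k) x"
  by (induction a B k rule: tridiag_pexpr.induct) (simp_all add: algebra_simps)

lemma c_free_tridiag_pexpr: "(\<And>k. c_free (B k)) \<Longrightarrow> c_free (tridiag_pexpr a B k)"
  by (induction a B k rule: tridiag_pexpr.induct) simp_all

(* H_coeff l i is minus the i-th diagonal entry of H_l (0-based); the products of
   opposite off-diagonal entries are mu^2 H_coeff l (i + 1). *)
definition H_coeff :: "nat \<Rightarrow> nat \<Rightarrow> real" where
  "H_coeff l k = real k * (real l - real k)"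

lemma P_det_eq_tridiag_poly:
  fixes x \<mu> :: real
  shows "P_det l x \<mu> = poly (tridiag_poly (H_coeff l) (\<lambda>k. \<mu>\<^sup>2 * H_coeff l k) l) x"
proof -
  define F where "F i j = (if j = i then x - H_coeff l i else if j = i + 1 then \<mu> * real (i + 1)
      else if i = j + 1 then \<mu> * (real l - real i) else 0)" for i j
  have "H l \<mu> + x \<cdot>\<^sub>m 1\<^sub>m l = mat l l (\<lambda>(i, j). F i j)"
    by (rule eq_matI) (auto simp: H_def F_def H_coeff_def)
  moreover have "det (mat l l (\<lambda>(i, j). F i j))
      = poly (tridiag_poly (H_coeff l) (\<lambda>k. \<mu>\<^sup>2 * H_coeff l k) l) x"
    by (rule det_tridiagonal_eq_tridiag_poly) (auto simp: F_def H_coeff_def power2_eq_square)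
  ultimately show ?thesis by (simp add: P_det_def)
qed

lemma P_det_root_functions:
  obtains \<rho> :: "real \<Rightarrow> nat \<Rightarrow> real"
  where "\<And>\<mu>. 0 < \<mu> \<Longrightarrow> strict_mono_on {..<l} (\<rho> \<mu>)"
    and "\<And>\<mu> x. 0 < \<mu> \<Longrightarrow> P_det l x \<mu> = (\<Prod>j<l. x - \<rho> \<mu> j)"
proof -
  have "\<forall>\<mu>::real. \<exists>r. 0 < \<mu> \<longrightarrow> strict_mono_on {..<l} r \<and> (\<forall>x. P_det l x \<mu> = (\<Prod>j<l. x - r j))"
  proof
    fix \<mu> :: real
    show "\<exists>r. 0 < \<mu> \<longrightarrow> strict_mono_on {..<l} r \<and> (\<forall>x. P_det l x \<mu> = (\<Prod>j<l. x - r j))"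
    proof (cases "0 < \<mu>")
      case True
      then have "0 < \<mu>\<^sup>2 * H_coeff l k" if "0 < k" "k < l" for k
        using that by (simp add: H_coeff_def)
      then show ?thesis
        using tridiag_poly_real_roots[of l "\<lambda>k. \<mu>\<^sup>2 * H_coeff l k" "H_coeff l"]
        by (simp add: P_det_eq_tridiag_poly)
    qed simp
  qed
  then obtain \<rho> where "\<forall>\<mu>::real. 0 < \<mu> \<longrightarrow> strict_mono_on {..<l} (\<rho> \<mu>)
      \<and> (\<forall>x. P_det l x \<mu> = (\<Prod>j<l. x - \<rho> \<mu> j))"
    by (rule choice[THEN exE])
  then show thesis using that by blast
qed

definition P_pexpr :: "nat \<Rightarrow> pexpr" where
  "P_pexpr l = tridiag_pexpr (H_coeff l) (\<lambda>k. Mul (Mul Vt Vt) (Const (H_coeff l k))) l"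

lemma peval_P_pexpr:
  fixes x \<mu> :: real
  shows "peval (P_pexpr l) x \<mu> c = P_det l x \<mu>"
  by (simp add: P_pexpr_def peval_tridiag_pexpr P_det_eq_tridiag_poly power2_eq_square)

lemma c_free_P_pexpr: "c_free (P_pexpr l)"
  by (simp add: P_pexpr_def c_free_tridiag_pexpr)

theorem lemma1p6:
  fixes l :: nat
  shows "\<exists>f :: nat \<Rightarrow> real \<Rightarrow> real.
           (\<forall>j<l. smooth_on (f j) {0<..}) \<and>
           (\<forall>\<mu>>0. \<forall>j. Suc j < l \<longrightarrow> f j \<mu> < f (Suc j) \<mu>) \<and>
           {(x, \<mu>). \<mu> > 0 \<and> P_det l x \<mu> = (0::real)}
             = {(f j \<mu>, \<mu>) | j \<mu>. j < l \<and> \<mu> > 0}"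
proof -
  obtain \<rho> :: "real \<Rightarrow> nat \<Rightarrow> real"
    where mono: "\<And>\<mu>. 0 < \<mu> \<Longrightarrow> strict_mono_on {..<l} (\<rho> \<mu>)"
      and roots: "\<And>\<mu> x. 0 < \<mu> \<Longrightarrow> P_det l x \<mu> = (\<Prod>j<l. x - \<rho> \<mu> j)"
    using P_det_root_functions[of l] by blast
  show ?thesis
  proof (intro exI[of _ "\<lambda>j \<mu>. \<rho> \<mu> j"] conjI allI impI)
    show "smooth_on (\<lambda>\<mu>. \<rho> \<mu> j) {0<..}" if "j < l" for j
      by (rule smooth_on_sorted_roots[OF open_greaterThan c_free_P_pexpr[of l] that])
        (simp_all add: mono roots peval_P_pexpr)
    show "\<rho> \<mu> j < \<rho> \<mu> (Suc j)" if "0 < \<mu>" "Suc j < l" for \<mu> j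
      using strict_mono_onD[OF mono[OF \<open>0 < \<mu>\<close>]] that by simp
    show "{(x, \<mu>). \<mu> > 0 \<and> P_det l x \<mu> = 0} = {(\<rho> \<mu> j, \<mu>) | j \<mu>. j < l \<and> \<mu> > 0}"
      by (auto simp: roots prod_zero_iff)
  qed
qed

end
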